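(* Assume Condition 1. For all $t\ge1$, $\bar V_t(\pi^* )\le\theta K$ and $\bar V_t(\pi_t)\le\theta K$.
   Context: Contextual bandit setting: $A$ a set of $K$ actions, $X$ contexts, $\Pi$ a finite set of $N$ policies, $D$ a distribution over $(x,\vec r)\in X\times[0,1]^K$ with marginal $D_X$; $(x_t,\vec r_t)\sim D$ i.i.d., the learner observes $x_t$, picks $a_t$, sees only $r_t:=r_t(a_t)$. $\eta_D(\pi)=\mathbb{E}[r(\pi(x))]$, $\pi^*$ a maximizer. $W_P(x,a)=\sum_{\pi:\pi(x)=a}P(\pi)$. With history $((x_i,a_i,r_i,p_i))_{i\le t}$, $\eta_t(W)=\frac1t\sum_i r_iW(x_i,a_i)/p_i$ for randomized policies $W$, $\pi_t=\arg\max_\pi\eta_t(\pi)$, $\Delta_t(W)=\eta_t(\pi_t)-\eta_t(W)$; $\mathbb{E}_{x\sim h_{t-1}}$ is the average over $x_1,\dots,x_{t-1}$. Actions are chosen by RandomizedUCB$(\Pi,\delta,K)$: $C_t=2\log(Nt/\delta)$, $\mu_t=\min\{\frac1{2K},\sqrt{C_t/(2Kt)}\}$; $P_t$ is a distribution over $\Pi$ whose objective $\sum_\pi P(\pi)\Delta_{t-1}(\pi)$ is within $\epsilon_{\mathrm{opt},t}=O(\sqrt{KC_t/t})$ of the optimum of minimizing it subject to: for all distributions $Q$ over $\Pi$, $\mathbb{E}_{\pi\sim Q}\mathbb{E}_{x\sim h_{t-1}}[1/((1-K\mu_t)W_P(x,\pi(x))+\mu_t)]\le\max\{4K,(t-1)\Delta_{t-1}(W_Q)^2/(180C_{t-1})\}$,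 with each constraint satisfied up to additive slack $K$; $W'_t(a)=(1-K\mu_t)W_{P_t}(x_t,a)+\mu_t$, $a_t\sim W'_t$, $p_t=W'_t(a_t)$. Constants: $\epsilon\in(0,1)$ fixed, $\rho=7500/\epsilon^3$, $\theta=(\rho+1)/(1-(1+\epsilon)/2)$. $t_0$ is the first $t$ with $\mu_t=\sqrt{C_t/(2Kt)}$; $t_1=\lceil16K\log(8KN/\delta)\rceil$. $V_t(\pi)=K$ for $t\le t_0$ and $V_t(\pi)=K+\mathbb{E}_{x\sim D_X}[1/((1-K\mu_t)W_{P_t}(x,\pi(x))+\mu_t)]$ for $t>t_0$; $\bar V_t(\pi)=\max_{\tau\le t}V_\tau(\pi)$. Condition 1: (i) for all $\pi\in\Pi$ and $t\ge t_1$, $\mathbb{E}_{x\sim D_X}[1/((1-K\mu_t)W_{P_t}(x,\pi(x))+\mu_t)]\le(1+\epsilon)\mathbb{E}_{x\sim h_{t-1}}[1/((1-K\mu_t)W_{P_t}(x,\pi(x))+\mu_t)]+\rho K$; and (ii) for all $\pi,\pi'\in\Pi$ and $t\ge t_0$, $|(\eta_t(\pi)-\eta_t(\pi'))-(\eta_D(\pi)-\eta_D(\pi'))|\le2\sqrt{(\bar V_t(\pi)+\bar V_t(\pi'))C_t/t}$. *)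

theory Defs
  imports "HOL-Probability.Probability"
begin

text \<open>Policies are functions from contexts to actions;
  a (randomized) policy W is a function context => action => real.
  The logarithm log is the natural logarithm ln.\<close>

definition Wpol :: "('x \<Rightarrow> 'a) set \<Rightarrow> (('x \<Rightarrow> 'a) \<Rightarrow> real) \<Rightarrow> 'x \<Rightarrow> 'a \<Rightarrow> real" where
  "Wpol Pol P x b = (\<Sum>\<pi>\<in>{\<pi>\<in>Pol. \<pi> x = b}. P \<pi>)"

definition detW :: "('x \<Rightarrow> 'a) \<Rightarrow> 'x \<Rightarrow> 'a \<Rightarrow> real" where
  "detW \<pi> x b = (if \<pi> x = b then 1 else 0)"

definition is_dist :: "('x \<Rightarrow> 'a) set \<Rightarrow> (('x \<Rightarrow> 'a) \<Rightarrow> real) \<Rightarrow> bool" where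
  "is_dist Pol Q \<longleftrightarrow> (\<forall>\<pi>\<in>Pol. 0 \<le> Q \<pi>) \<and> (\<Sum>\<pi>\<in>Pol. Q \<pi>) = 1"

definition Cc :: "nat \<Rightarrow> real \<Rightarrow> nat \<Rightarrow> real" where
  "Cc N \<delta> t = 2 * ln (real N * real t / \<delta>)"

definition mu :: "nat \<Rightarrow> nat \<Rightarrow> real \<Rightarrow> nat \<Rightarrow> real" where
  "mu K N \<delta> t = min (1 / (2 * real K)) (sqrt (Cc N \<delta> t / (2 * real K * real t)))"

definition t0 :: "nat \<Rightarrow> nat \<Rightarrow> real \<Rightarrow> nat" where
  "t0 K N \<delta> = (LEAST t::nat. 1 \<le> t \<and> mu K N \<delta> t = sqrt (Cc N \<delta> t / (2 * real K * real t)))"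

definition t1 :: "nat \<Rightarrow> nat \<Rightarrow> real \<Rightarrow> nat" where
  "t1 K N \<delta> = nat \<lceil>16 * real K * ln (8 * real K * real N / \<delta>)\<rceil>"

definition eta_emp :: "(nat \<Rightarrow> 'x) \<Rightarrow> (nat \<Rightarrow> 'a) \<Rightarrow> (nat \<Rightarrow> real) \<Rightarrow> (nat \<Rightarrow> real)
    \<Rightarrow> nat \<Rightarrow> ('x \<Rightarrow> 'a \<Rightarrow> real) \<Rightarrow> real" where
  "eta_emp x a r p t W = (1 / real t) * (\<Sum>i=1..t. r i * W (x i) (a i) / p i)"

definition emp_avg :: "(nat \<Rightarrow> 'x) \<Rightarrow> nat \<Rightarrow> ('x \<Rightarrow> real) \<Rightarrow> real" where
  "emp_avg x t f = (1 / real t) * (\<Sum>i=1..t. f (x i))"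

definition invW :: "nat \<Rightarrow> real \<Rightarrow> ('x \<Rightarrow> 'a) set \<Rightarrow> (('x \<Rightarrow> 'a) \<Rightarrow> real) \<Rightarrow> ('x \<Rightarrow> 'a) \<Rightarrow> 'x \<Rightarrow> real" where
  "invW K m Pol P \<pi> z = 1 / ((1 - real K * m) * Wpol Pol P z (\<pi> z) + m)"

definition Vt :: "nat \<Rightarrow> nat \<Rightarrow> real \<Rightarrow> ('x \<Rightarrow> 'a) set \<Rightarrow> (nat \<Rightarrow> ('x \<Rightarrow> 'a) \<Rightarrow> real)
    \<Rightarrow> 'x measure \<Rightarrow> nat \<Rightarrow> ('x \<Rightarrow> 'a) \<Rightarrow> real" where
  "Vt K N \<delta> Pol P DX t \<pi> =
     (if t \<le> t0 K N \<delta> then real K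
      else real K + (\<integral>z. invW K (mu K N \<delta> t) Pol (P t) \<pi> z \<partial>DX))"

definition Vbar :: "nat \<Rightarrow> nat \<Rightarrow> real \<Rightarrow> ('x \<Rightarrow> 'a) set \<Rightarrow> (nat \<Rightarrow> ('x \<Rightarrow> 'a) \<Rightarrow> real)
    \<Rightarrow> 'x measure \<Rightarrow> nat \<Rightarrow> ('x \<Rightarrow> 'a) \<Rightarrow> real" where
  "Vbar K N \<delta> Pol P DX t \<pi> = Max ((\<lambda>\<tau>. Vt K N \<delta> Pol P DX \<tau> \<pi>) ` {1..t})"

end

theory Submission
  imports Defs
begin

text \<open>Until \<open>t\<^sub>0\<close> the variance \<open>V\<^sub>\<tau>\<close> equals \<open>K\<close>, and between \<open>t\<^sub>0\<close> and \<open>t\<^sub>1\<close> the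
  exploration floor \<open>\<mu>\<^sub>\<tau> \<ge> 1/(6K)\<close> bounds every inverse propensity by \<open>6K\<close>. From \<open>t\<^sub>1\<close> on,
  Condition 1(i) and the optimisation constraint at the point mass on \<open>\<pi>\<close> bound \<open>V\<^sub>\<tau>(\<pi>)\<close> by
  \<open>K + (1 + \<epsilon>)(max{4K, (\<tau> - 1) \<Delta>\<^sub>\<tau>\<^sub>-\<^sub>1(\<pi>)\<^sup>2 / (180 C\<^sub>\<tau>\<^sub>-\<^sub>1)} + K) + \<rho> K\<close>, while
  Condition 1(ii), together with the optimality of \<open>\<pi>\<^sub>\<tau>\<^sub>-\<^sub>1\<close> for \<open>\<eta>\<^sub>\<tau>\<^sub>-\<^sub>1\<close> and of \<open>\<pi>\<^sup>*\<close>
  for \<open>\<eta>\<^sub>D\<close> and the decrease of \<open>C\<^sub>t/t\<close>, bounds \<open>\<Delta>\<^sub>\<tau>\<^sub>-\<^sub>1(\<pi>\<^sup>*)\<close> and \<open>\<Delta>\<^sub>\<tau>\<^sub>-\<^sub>1(\<pi>\<^sub>t)\<close> by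
  square roots of \<open>C\<^sub>\<tau>\<^sub>-\<^sub>1/(\<tau> - 1)\<close> times sums of \<open>V\<close>-values. By strong induction on \<open>t\<close> these
  values are at most \<open>\<theta> K\<close>, except \<open>M = V\<^sub>t(\<pi>\<^sub>t)\<close> itself, which thus satisfies
  \<open>M \<le> max{\<theta> K, f(M)}\<close> for an \<open>f\<close> of slope below one; this forces \<open>M \<le> \<theta> K\<close>.\<close>

lemma Cc_pos:
  assumes "1 \<le> N" "0 < \<delta>" "\<delta> < 1" "1 \<le> t"
  shows "0 < Cc N \<delta> t"
proof -
  have "1 * 1 \<le> real N * real t" using assms by (intro mult_mono) auto
  then have "1 < real N * real t / \<delta>" using assms by (simp add: field_simps)
  then show ?thesis unfolding Cc_def by simp
qed

lemma mu_pos: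
  assumes "1 \<le> N" "0 < \<delta>" "\<delta> < 1" "1 \<le> t" "1 \<le> K"
  shows "0 < mu K N \<delta> t"
  using Cc_pos[OF assms(1-4)] assms(4,5) unfolding mu_def by (auto intro!: divide_pos_pos)

lemma K_mu_le_half: "1 \<le> K \<Longrightarrow> real K * mu K N \<delta> t \<le> 1 / 2"
  unfolding mu_def by (simp add: min_def field_simps)

lemma mu_eq_sqrt_of_large:
  assumes "1 \<le> K" "1 \<le> N" "0 < \<delta>" "1 \<le> t" "64 * real K ^ 2 * real N / \<delta> \<le> real t"
  shows "mu K N \<delta> t = sqrt (Cc N \<delta> t / (2 * real K * real t))"
proof -
  define y where "y = real N * real t / \<delta>"
  have y: "0 < y" unfolding y_def using assms by simp
  have "ln y = 2 * ln (sqrt y)" using y by (simp add: ln_sqrt)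
  also have "\<dots> \<le> 2 * sqrt y" using ln_le_minus_one[of "sqrt y"] y by simp
  finally have ln_le: "ln y \<le> 2 * sqrt y" .
  have "(8 * real K * sqrt y)\<^sup>2 = 64 * real K ^ 2 * real N / \<delta> * real t"
    using y by (simp add: power_mult_distrib y_def)
  also have "\<dots> \<le> (real t)\<^sup>2"
    using assms(4,5) mult_right_mono[OF assms(5), of "real t"] by (simp add: power2_eq_square)
  finally have "8 * real K * sqrt y \<le> real t" by (rule power2_le_imp_le) simp
  moreover have "4 * real K * ln y \<le> 4 * real K * (2 * sqrt y)"
    using ln_le by (intro mult_left_mono) auto
  ultimately have "4 * real K * ln y \<le> real t" by linarith
  then have "Cc N \<delta> t / (2 * real K * real t) \<le> (1 / (2 * real K))\<^sup>2"
    using assms(1,4) unfolding Cc_def y_def[symmetric] by (simp add: field_simps power2_eq_square)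
  then have "sqrt (Cc N \<delta> t / (2 * real K * real t)) \<le> 1 / (2 * real K)"
    using assms(1) by (intro real_le_lsqrt) auto
  then show ?thesis unfolding mu_def by simp
qed

text \<open>Without a witness the \<open>LEAST\<close> in \<open>t0\<close> would be an unspecified number.\<close>
lemma t0_ge_1:
  assumes "1 \<le> K" "1 \<le> N" "0 < \<delta>"
  shows "1 \<le> t0 K N \<delta>"
proof -
  define t where "t = nat \<lceil>64 * real K ^ 2 * real N / \<delta>\<rceil> + 1"
  have "64 * real K ^ 2 * real N / \<delta> \<le> real t"
    unfolding t_def by linarith
  then have "1 \<le> t \<and> mu K N \<delta> t = sqrt (Cc N \<delta> t / (2 * real K * real t))"
    using mu_eq_sqrt_of_large[OF assms] unfolding t_def by simp
  then show ?thesis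
    unfolding t0_def by (rule LeastI2) simp
qed

lemma Cc_div_antimono:
  assumes "1 \<le> N" "0 < \<delta>" "1 \<le> s" "s \<le> t" "1 \<le> ln (real N * real s / \<delta>)"
  shows "Cc N \<delta> t / real t \<le> Cc N \<delta> s / real s"
proof -
  define L where "L = ln (real N * real s / \<delta>)"
  have pos: "0 < real s" "0 < real t" "0 < real N * real s / \<delta>" using assms by auto
  have "real N * real t / \<delta> = (real t / real s) * (real N * real s / \<delta>)"
    using pos by (simp add: field_simps)
  then have "ln (real N * real t / \<delta>) = ln (real t / real s) + L"
    unfolding L_def using pos by (simp only: ln_mult) auto
  also have "\<dots> \<le> real t / real s - 1 + L" using ln_le_minus_one[of "real t / real s"] pos by simp
  finally have "real s * ln (real N * real t / \<delta>) \<le> real t - real s + real s * L"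
    using pos by (simp add: field_simps)
  also have "\<dots> \<le> real t * L"
    using mult_right_mono[of 1 L "real t - real s"] assms(4,5) unfolding L_def by (simp add: algebra_simps)
  finally show ?thesis unfolding Cc_def L_def using pos by (simp add: field_simps)
qed

lemma t1_le_D: "t1 K N \<delta> \<le> \<tau> \<Longrightarrow> 16 * real K * ln (8 * real K * real N / \<delta>) \<le> real \<tau>"
  unfolding t1_def by linarith

lemma less_t1_D: "\<tau> < t1 K N \<delta> \<Longrightarrow> real \<tau> < 16 * real K * ln (8 * real K * real N / \<delta>)"
  unfolding t1_def by linarith

lemma ln_8_ge_2: "2 \<le> ln (8::real)"
  using ln_realpow[of 2 3] ln2_ge_two_thirds by simp

lemma inverse_6K_le_mu:
  assumes "1 \<le> K" "1 \<le> N" "0 < \<delta>" "\<delta> < 1" "2 \<le> t" "t < t1 K N \<delta>"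
  shows "1 / (6 * real K) \<le> mu K N \<delta> t"
proof -
  have "real t \<le> real N * real t / \<delta>" using assms by (simp add: field_simps)
  then have ln_t: "ln (real t) \<le> ln (real N * real t / \<delta>)" using assms(5) by simp
  have ln_2: "ln 2 \<le> ln (real t)" using assms(5) by simp
  have "real K * (2 / 3) \<le> real K * ln (real N * real t / \<delta>)"
    using ln_t ln_2 ln2_ge_two_thirds by (intro mult_left_mono) auto
  then have K_ln: "2 / 3 * real K \<le> real K * ln (real N * real t / \<delta>)" by simp
  have "real t \<le> 36 * real K * ln (real N * real t / \<delta>)"
  proof (cases "real t \<le> 8 * real K")
    case True
    then show ?thesis using K_ln by linarith
  next
    case False
    have "8 * real K * real N / \<delta> \<le> real N * real t / \<delta>"
      using False assms(2,3) by (simp add: divide_right_mono)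
    then have "ln (8 * real K * real N / \<delta>) \<le> ln (real N * real t / \<delta>)"
      using assms(1-3) by (intro ln_mono) auto
    then have "16 * real K * ln (8 * real K * real N / \<delta>) \<le> 16 * real K * ln (real N * real t / \<delta>)"
      by (intro mult_left_mono) auto
    then show ?thesis using less_t1_D[OF assms(6)] K_ln assms(1) by linarith
  qed
  then have "(1 / (6 * real K))\<^sup>2 \<le> Cc N \<delta> t / (2 * real K * real t)"
    using assms(1,5) unfolding Cc_def by (simp add: field_simps power2_eq_square)
  then have "1 / (6 * real K) \<le> sqrt (Cc N \<delta> t / (2 * real K * real t))"
    using assms(1) by (simp add: real_le_rsqrt)
  moreover have "1 / (6 * real K) \<le> 1 / (2 * real K)" using assms(1) by (simp add: field_simps)
  ultimately show ?thesis unfolding mu_def by simp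
qed

lemma t1_le_imp_ln_ge_1:
  assumes "1 \<le> K" "1 \<le> N" "0 < \<delta>" "\<delta> < 1" "t1 K N \<delta> \<le> \<tau>"
  shows "3 \<le> \<tau> - 1" "1 \<le> ln (real N * real (\<tau> - 1) / \<delta>)"
proof -
  have "8 \<le> 8 * real K * real N / \<delta>"
    using assms(1-4) mult_mono[of 1 "real K" 1 "real N"] by (simp add: field_simps)
  then have "2 \<le> ln (8 * real K * real N / \<delta>)"
    using ln_8_ge_2 ln_mono[of 8 "8 * real K * real N / \<delta>"] by linarith
  then have "16 * real K * 2 \<le> 16 * real K * ln (8 * real K * real N / \<delta>)"
    by (intro mult_left_mono) auto
  then have "32 \<le> real \<tau>"
    using t1_le_D[OF assms(5)] assms(1) by linarith
  then show s: "3 \<le> \<tau> - 1" by linarith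
  have "3 \<le> real N * real (\<tau> - 1)"
    using s assms(2) mult_mono[of 1 "real N" 3 "real (\<tau> - 1)"] by simp
  also have "\<dots> \<le> real N * real (\<tau> - 1) / \<delta>"
    using assms(3,4) by (simp add: le_divide_eq mult_left_le)
  finally have "3 \<le> real N * real (\<tau> - 1) / \<delta>" .
  then show "1 \<le> ln (real N * real (\<tau> - 1) / \<delta>)"
    using exp_le by (intro ln_ge_iff[THEN iffD2]) linarith+
qed

text \<open>Condition 1(i) and the constraint at the point mass on \<open>\<pi>\<close> bound \<open>V\<^sub>\<tau>(\<pi>)\<close>, for
  \<open>\<tau> \<ge> t\<^sub>1\<close>, by this expression at \<open>X = (\<tau> - 1) \<Delta>\<^sub>\<tau>\<^sub>-\<^sub>1(\<pi>)\<^sup>2 / (180 C\<^sub>\<tau>\<^sub>-\<^sub>1)\<close>.\<close>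
definition Vt_late_bound :: "real \<Rightarrow> real \<Rightarrow> nat \<Rightarrow> real \<Rightarrow> real" where
  "Vt_late_bound \<epsilon> \<rho> K X = real K + (1 + \<epsilon>) * (max (4 * real K) X + real K) + \<rho> * real K"

lemma Vt_late_bound_mono:
  "0 \<le> 1 + \<epsilon> \<Longrightarrow> X \<le> Y \<Longrightarrow> Vt_late_bound \<epsilon> \<rho> K X \<le> Vt_late_bound \<epsilon> \<rho> K Y"
  unfolding Vt_late_bound_def
  using mult_left_mono[of "max (4 * real K) X + real K" "max (4 * real K) Y + real K" "1 + \<epsilon>"]
  by auto

lemma Vt_late_bound_le:
  assumes "0 \<le> \<epsilon>" "100 \<le> \<theta>" "\<rho> + 1 = \<theta> * (1 - \<epsilon>) / 2" "\<theta> * real K \<le> Y" "X \<le> 8 * Y / 45"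
  shows "Vt_late_bound \<epsilon> \<rho> K X \<le> (1 - \<epsilon>) / 2 * (\<theta> * real K) + (1 + \<epsilon>) * (169 / 900 * Y)"
proof -
  have "100 * real K \<le> \<theta> * real K" using assms(2) by (intro mult_right_mono) auto
  then have "max (4 * real K) X + real K \<le> 169 / 900 * Y" using assms(4,5) by linarith
  then have "(1 + \<epsilon>) * (max (4 * real K) X + real K) \<le> (1 + \<epsilon>) * (169 / 900 * Y)"
    using assms(1) by (intro mult_left_mono) auto
  moreover have "real K + \<rho> * real K = (1 - \<epsilon>) / 2 * (\<theta> * real K)"
    using arg_cong[OF assms(3), of "\<lambda>u. u * real K"] by (simp add: algebra_simps)
  ultimately show ?thesis unfolding Vt_late_bound_def by linarith
qed

lemma Vt_late_bound_le_theta_K: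
  assumes "0 \<le> \<epsilon>" "100 \<le> \<theta>" "\<rho> + 1 = \<theta> * (1 - \<epsilon>) / 2" "X \<le> 4 * (\<theta> * real K) / 45"
  shows "Vt_late_bound \<epsilon> \<rho> K X \<le> \<theta> * real K"
proof -
  have "0 \<le> \<theta> * real K" using assms(2) by simp
  then have "X \<le> 8 * (\<theta> * real K) / 45" using assms(4) by linarith
  then have "Vt_late_bound \<epsilon> \<rho> K X \<le> ((1 - \<epsilon>) / 2 + (1 + \<epsilon>) * (169 / 900)) * (\<theta> * real K)"
    using Vt_late_bound_le[OF assms(1-3) order_refl] by (simp add: algebra_simps)
  also have "\<dots> \<le> 1 * (\<theta> * real K)"
    using assms(1,2) by (intro mult_right_mono) (auto simp: field_simps)
  finally show ?thesis by simp
qed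

text \<open>The self-bounding inequality for \<open>M = V\<^sub>t(\<pi>\<^sub>t)\<close>: above \<open>\<theta> K\<close> the right-hand side
  grows with slope \<open>(1 + \<epsilon>) 169/900 < 1\<close>.\<close>
lemma le_theta_K_of_le_Vt_late_bound:
  assumes "0 \<le> \<epsilon>" "\<epsilon> \<le> 1" "100 \<le> \<theta>" "\<rho> + 1 = \<theta> * (1 - \<epsilon>) / 2"
    and M: "M \<le> max (\<theta> * real K) (Vt_late_bound \<epsilon> \<rho> K (4 * (\<theta> * real K + M) / 45))"
  shows "M \<le> \<theta> * real K"
proof (rule ccontr)
  assume "\<not> M \<le> \<theta> * real K"
  then have gt: "\<theta> * real K < M" by simp
  define b where "b = (1 + \<epsilon>) * (169 / 900)"
  have b: "b < 1" "(1 - \<epsilon>) / 2 \<le> 1 - b" unfolding b_def using assms(1,2) by (auto simp: field_simps)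
  have "M \<le> Vt_late_bound \<epsilon> \<rho> K (4 * (\<theta> * real K + M) / 45)" using M gt by linarith
  also have "\<dots> \<le> (1 - \<epsilon>) / 2 * (\<theta> * real K) + b * M"
    using Vt_late_bound_le[OF assms(1,3,4), of K M] gt unfolding b_def by (simp add: algebra_simps)
  finally have "M - b * M \<le> (1 - \<epsilon>) / 2 * (\<theta> * real K)" by linarith
  then have "(1 - b) * M \<le> (1 - \<epsilon>) / 2 * (\<theta> * real K)" by (simp add: left_diff_distrib)
  also have "\<dots> \<le> (1 - b) * (\<theta> * real K)"
    using b assms(3) by (intro mult_right_mono) auto
  also have "\<dots> < (1 - b) * M" using b gt by (intro mult_strict_left_mono) auto
  finally show False by simp
qed

lemma sq_le_of_le_two_sqrt_add:
  fixes d a b :: real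
  assumes "0 \<le> d" "0 \<le> a" "0 \<le> b" "d \<le> 2 * sqrt a + 2 * sqrt b"
  shows "d\<^sup>2 \<le> 8 * (a + b)"
proof -
  have "d\<^sup>2 \<le> (2 * sqrt a + 2 * sqrt b)\<^sup>2" using assms(1,4) by (intro power_mono) auto
  also have "\<dots> = 8 * (a + b) - 4 * (sqrt a - sqrt b)\<^sup>2"
    using assms(2,3) by (simp add: power2_sum power2_diff power_mult_distrib algebra_simps)
  finally show ?thesis using zero_le_power2[of "sqrt a - sqrt b"] by linarith
qed

lemma Wpol_nonneg: "is_dist Pol P \<Longrightarrow> 0 \<le> Wpol Pol P z b"
  unfolding Wpol_def is_dist_def by (auto intro: sum_nonneg)

lemma invW_nonneg_le:
  assumes "is_dist Pol P" "0 < m" "real K * m \<le> 1"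
  shows "0 \<le> invW K m Pol P \<pi> z" "invW K m Pol P \<pi> z \<le> 1 / m"
proof -
  have "0 \<le> (1 - real K * m) * Wpol Pol P z (\<pi> z)"
    using assms Wpol_nonneg[OF assms(1)] by simp
  then have "m \<le> (1 - real K * m) * Wpol Pol P z (\<pi> z) + m" by simp
  then show "0 \<le> invW K m Pol P \<pi> z" "invW K m Pol P \<pi> z \<le> 1 / m"
    unfolding invW_def using assms(2) by (auto intro: divide_left_mono)
qed

lemma (in prob_space) integral_le_nonneg_const:
  fixes f :: "'a \<Rightarrow> real"
  assumes "\<And>z. z \<in> space M \<Longrightarrow> f z \<le> c" "0 \<le> c"
  shows "integral\<^sup>L M f \<le> c"
proof (cases "integrable M f")
  case True
  then show ?thesis using assms(1) by (intro integral_le_const) auto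
next
  case False
  then show ?thesis using assms(2) by (simp add: not_integrable_integral_eq)
qed

lemma sum_indicator_singleton_mult:
  fixes f :: "'a \<Rightarrow> real"
  assumes "finite A"
  shows "(\<Sum>x\<in>A. indicator {a} x * f x) = indicator A a * f a"
proof -
  have "(\<Sum>x\<in>A. indicator {a} x * f x) = (\<Sum>x\<in>A. if x = a then f x else 0)"
    by (rule sum.cong) (auto simp: indicator_def)
  then show ?thesis using assms by (simp add: sum.delta indicator_def)
qed

lemma is_dist_indicator: "finite Pol \<Longrightarrow> \<pi> \<in> Pol \<Longrightarrow> is_dist Pol (indicator {\<pi>})"
  unfolding is_dist_def using sum_indicator_singleton_mult[of Pol \<pi> "\<lambda>_. 1"] by simp

lemma Wpol_indicator: "finite Pol \<Longrightarrow> \<pi> \<in> Pol \<Longrightarrow> Wpol Pol (indicator {\<pi>}) = detW \<pi>"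
  unfolding Wpol_def detW_def
  using sum_indicator_singleton_mult[of _ \<pi> "\<lambda>_. 1"] by (intro ext) simp

lemma Vt_le_Vbar: "\<tau> \<in> {1..t} \<Longrightarrow> Vt K N \<delta> Pol P DX \<tau> \<pi> \<le> Vbar K N \<delta> Pol P DX t \<pi>"
  unfolding Vbar_def by (rule Max_ge) auto

lemma Vbar_le_iff:
  "1 \<le> t \<Longrightarrow> Vbar K N \<delta> Pol P DX t \<pi> \<le> B \<longleftrightarrow> (\<forall>\<tau>\<in>{1..t}. Vt K N \<delta> Pol P DX \<tau> \<pi> \<le> B)"
  unfolding Vbar_def by (subst Max_le_iff) auto

lemma Vbar_mono: "1 \<le> s \<Longrightarrow> s \<le> t \<Longrightarrow> Vbar K N \<delta> Pol P DX s \<pi> \<le> Vbar K N \<delta> Pol P DX t \<pi>"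
  by (simp add: Vbar_le_iff Vt_le_Vbar)

text \<open>Condition 1 and the properties of the RandomizedUCB run that the argument uses. \<open>K\<close> and
  \<open>N\<close> are the numbers of actions and policies, but only \<open>K, N \<ge> 1\<close> matter, and of
  \<open>\<rho> = 7500/\<epsilon>\<^sup>3\<close> only \<open>\<rho> \<ge> 99\<close> is needed.\<close>
locale randomized_ucb_cond1 =
  fixes K N :: nat and \<delta> \<epsilon> \<rho> :: real
    and Pol :: "('x \<Rightarrow> 'a) set" and DX :: "'x measure"
    and P :: "nat \<Rightarrow> ('x \<Rightarrow> 'a) \<Rightarrow> real" and ctx :: "nat \<Rightarrow> 'x"
    and \<eta> :: "nat \<Rightarrow> ('x \<Rightarrow> 'a \<Rightarrow> real) \<Rightarrow> real" and \<eta>D :: "('x \<Rightarrow> 'a) \<Rightarrow> real"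
    and pit :: "nat \<Rightarrow> 'x \<Rightarrow> 'a" and pistar :: "'x \<Rightarrow> 'a"
  assumes K_ge_1: "1 \<le> K" and N_ge_1: "1 \<le> N"
    and delta: "0 < \<delta>" "\<delta> < 1" and eps: "0 < \<epsilon>" "\<epsilon> < 1" and rho_ge_99: "99 \<le> \<rho>"
    and prob_DX: "prob_space DX" and finite_Pol: "finite Pol"
    and pit_in: "pit t \<in> Pol" and pit_max: "\<pi> \<in> Pol \<Longrightarrow> \<eta> t (detW \<pi>) \<le> \<eta> t (detW (pit t))"
    and pistar_in: "pistar \<in> Pol" and pistar_max: "\<pi> \<in> Pol \<Longrightarrow> \<eta>D \<pi> \<le> \<eta>D pistar"
    and P_dist: "1 \<le> t \<Longrightarrow> is_dist Pol (P t)"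
    and P_constr: "1 \<le> t \<Longrightarrow> is_dist Pol Q \<Longrightarrow>
      (\<Sum>\<pi>\<in>Pol. Q \<pi> * emp_avg ctx (t - 1) (invW K (mu K N \<delta> t) Pol (P t) \<pi>))
        \<le> max (4 * real K) (real (t - 1) * (\<eta> (t - 1) (detW (pit (t - 1))) - \<eta> (t - 1) (Wpol Pol Q))\<^sup>2
              / (180 * Cc N \<delta> (t - 1))) + real K"
    and cond1_i: "\<pi> \<in> Pol \<Longrightarrow> t1 K N \<delta> \<le> t \<Longrightarrow>
      (\<integral>z. invW K (mu K N \<delta> t) Pol (P t) \<pi> z \<partial>DX)
        \<le> (1 + \<epsilon>) * emp_avg ctx (t - 1) (invW K (mu K N \<delta> t) Pol (P t) \<pi>) + \<rho> * real K"
    and cond1_ii: "\<pi> \<in> Pol \<Longrightarrow> \<pi>' \<in> Pol \<Longrightarrow> t0 K N \<delta> \<le> t \<Longrightarrow>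
      \<bar>(\<eta> t (detW \<pi>) - \<eta> t (detW \<pi>')) - (\<eta>D \<pi> - \<eta>D \<pi>')\<bar>
        \<le> 2 * sqrt ((Vbar K N \<delta> Pol P DX t \<pi> + Vbar K N \<delta> Pol P DX t \<pi>') * Cc N \<delta> t / real t)"
begin

abbreviation "\<mu> \<equiv> mu K N \<delta>"
abbreviation "C \<equiv> Cc N \<delta>"
abbreviation "Vround \<equiv> Vt K N \<delta> Pol P DX"
abbreviation "Vmax \<equiv> Vbar K N \<delta> Pol P DX"
definition \<theta> :: real where "\<theta> = (\<rho> + 1) / (1 - (1 + \<epsilon>) / 2)"
abbreviation "\<Delta> t W \<equiv> \<eta> t (detW (pit t)) - \<eta> t W"

lemma rho_eq: "\<rho> + 1 = \<theta> * (1 - \<epsilon>) / 2"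
  using eps unfolding \<theta>_def by (simp add: field_simps)

lemma theta_ge_100: "100 \<le> \<theta>"
proof -
  have "\<rho> + 1 \<le> \<theta>" using eps rho_ge_99 unfolding \<theta>_def by (simp add: field_simps)
  then show ?thesis using rho_ge_99 by linarith
qed

lemma mu_bounds:
  assumes "1 \<le> t" shows "0 < \<mu> t" "real K * \<mu> t \<le> 1"
  using mu_pos[OF N_ge_1 delta assms K_ge_1] K_mu_le_half[OF K_ge_1, of N \<delta> t] by auto

lemma integral_invW_bounds:
  assumes "1 \<le> \<tau>"
  shows "0 \<le> (\<integral>z. invW K (\<mu> \<tau>) Pol (P \<tau>) \<pi> z \<partial>DX)"
    and "(\<integral>z. invW K (\<mu> \<tau>) Pol (P \<tau>) \<pi> z \<partial>DX) \<le> 1 / \<mu> \<tau>"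
proof -
  note \<mu> = mu_bounds[OF assms]
  note invW = invW_nonneg_le[OF P_dist[OF assms] \<mu>]
  show "0 \<le> (\<integral>z. invW K (\<mu> \<tau>) Pol (P \<tau>) \<pi> z \<partial>DX)" using invW(1) by simp
  show "(\<integral>z. invW K (\<mu> \<tau>) Pol (P \<tau>) \<pi> z \<partial>DX) \<le> 1 / \<mu> \<tau>"
    using invW(2) \<mu>(1) by (intro prob_space.integral_le_nonneg_const[OF prob_DX]) auto
qed

lemma Vmax_nonneg:
  assumes "1 \<le> t" shows "0 \<le> Vmax t \<pi>"
proof -
  have "0 \<le> Vround 1 \<pi>" using integral_invW_bounds(1)[of 1 \<pi>] by (simp add: Vt_def)
  also have "\<dots> \<le> Vmax t \<pi>" using assms by (intro Vt_le_Vbar) simp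
  finally show ?thesis .
qed

lemma Vround_le_theta_K_early:
  assumes "1 \<le> \<tau>" "\<tau> \<le> t0 K N \<delta> \<or> \<tau> < t1 K N \<delta>"
  shows "Vround \<tau> \<pi> \<le> \<theta> * real K"
proof (cases "\<tau> \<le> t0 K N \<delta>")
  case True
  have "1 * real K \<le> \<theta> * real K" using theta_ge_100 by (intro mult_right_mono) auto
  then show ?thesis using True by (simp add: Vt_def)
next
  case False
  then have "2 \<le> \<tau>" using t0_ge_1[OF K_ge_1 N_ge_1 delta(1)] by linarith
  then have "1 / (6 * real K) \<le> \<mu> \<tau>"
    using inverse_6K_le_mu[OF K_ge_1 N_ge_1 delta] False assms(2) by simp
  then have "1 / \<mu> \<tau> \<le> 1 / (1 / (6 * real K))"
    using K_ge_1 mu_bounds(1)[OF assms(1)] by (intro divide_left_mono) auto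
  then have "1 / \<mu> \<tau> \<le> 6 * real K" by simp
  moreover have "7 * real K \<le> \<theta> * real K" using theta_ge_100 by (intro mult_right_mono) auto
  ultimately show ?thesis
    using False integral_invW_bounds(2)[OF assms(1), of \<pi>] by (simp add: Vt_def)
qed

lemma late_round:
  assumes "t0 K N \<delta> < \<tau>" "t1 K N \<delta> \<le> \<tau>"
  shows "1 \<le> \<tau> - 1" "t0 K N \<delta> \<le> \<tau> - 1" "1 \<le> ln (real N * real (\<tau> - 1) / \<delta>)" "0 < C (\<tau> - 1)"
  using t1_le_imp_ln_ge_1[OF K_ge_1 N_ge_1 delta assms(2)] Cc_pos[OF N_ge_1 delta, of "\<tau> - 1"] assms(1)
  by auto

lemma Vround_le_late_bound:
  assumes "\<pi> \<in> Pol" "t0 K N \<delta> < \<tau>" "t1 K N \<delta> \<le> \<tau>"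
  shows "Vround \<tau> \<pi> \<le> Vt_late_bound \<epsilon> \<rho> K (real (\<tau> - 1) * (\<Delta> (\<tau> - 1) (detW \<pi>))\<^sup>2 / (180 * C (\<tau> - 1)))"
proof -
  define E where "E = emp_avg ctx (\<tau> - 1) (invW K (\<mu> \<tau>) Pol (P \<tau>) \<pi>)"
  define X where "X = real (\<tau> - 1) * (\<Delta> (\<tau> - 1) (detW \<pi>))\<^sup>2 / (180 * C (\<tau> - 1))"
  have "1 \<le> \<tau>" using late_round(1)[OF assms(2,3)] by simp
  have "E \<le> max (4 * real K) X + real K"
    using P_constr[OF \<open>1 \<le> \<tau>\<close> is_dist_indicator[OF finite_Pol assms(1)]] assms(1)
    unfolding E_def X_def Wpol_indicator[OF finite_Pol assms(1)]
    by (simp add: sum_indicator_singleton_mult[OF finite_Pol])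
  then have "(1 + \<epsilon>) * E \<le> (1 + \<epsilon>) * (max (4 * real K) X + real K)"
    using eps by (intro mult_left_mono) auto
  moreover have "Vround \<tau> \<pi> = real K + (\<integral>z. invW K (\<mu> \<tau>) Pol (P \<tau>) \<pi> z \<partial>DX)"
    using assms(2) by (simp add: Vt_def)
  ultimately show ?thesis
    using cond1_i[OF assms(1,3)] unfolding E_def X_def Vt_late_bound_def by linarith
qed

lemma Delta_nonneg: "\<pi> \<in> Pol \<Longrightarrow> 0 \<le> \<Delta> s (detW \<pi>)"
  using pit_max by simp

lemma Vround_le_late_bound_of_Delta_le:
  assumes "\<pi> \<in> Pol" "t0 K N \<delta> < \<tau>" "t1 K N \<delta> \<le> \<tau>" "0 \<le> A" "0 \<le> B"
    and "\<Delta> (\<tau> - 1) (detW \<pi>)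
      \<le> 2 * sqrt (A * C (\<tau> - 1) / real (\<tau> - 1)) + 2 * sqrt (B * C (\<tau> - 1) / real (\<tau> - 1))"
  shows "Vround \<tau> \<pi> \<le> Vt_late_bound \<epsilon> \<rho> K (2 * (A + B) / 45)"
proof -
  define s where "s = \<tau> - 1"
  have s: "1 \<le> s" "0 < C s" using late_round[OF assms(2,3)] unfolding s_def by auto
  have "(\<Delta> s (detW \<pi>))\<^sup>2 \<le> 8 * (A * C s / real s + B * C s / real s)"
    using s assms(4,5)
    by (intro sq_le_of_le_two_sqrt_add Delta_nonneg[OF assms(1)] assms(6)[folded s_def]) auto
  then have "real s * (\<Delta> s (detW \<pi>))\<^sup>2 / (180 * C s) \<le> 2 * (A + B) / 45"
    using s by (simp add: field_simps)
  then show ?thesis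
    using order_trans[OF Vround_le_late_bound[OF assms(1-3)] Vt_late_bound_mono] eps
    unfolding s_def by simp
qed

lemma Delta_pistar_le:
  assumes "t0 K N \<delta> \<le> s"
  shows "\<Delta> s (detW pistar) \<le> 2 * sqrt ((Vmax s (pit s) + Vmax s pistar) * C s / real s)"
  using abs_le_D1[OF cond1_ii[OF pit_in[of s] pistar_in assms]] pistar_max[OF pit_in[of s]]
  by linarith

lemma Delta_pit_le:
  assumes "t0 K N \<delta> \<le> s" "1 \<le> s" "s \<le> t" "1 \<le> ln (real N * real s / \<delta>)"
  shows "\<Delta> s (detW (pit t))
    \<le> 2 * sqrt ((Vmax t pistar + Vmax t (pit t)) * C s / real s)
      + 2 * sqrt ((Vmax s (pit s) + Vmax s (pit t)) * C s / real s)"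
proof -
  have "\<eta>D pistar - \<eta>D (pit t) \<le> 2 * sqrt ((Vmax t pistar + Vmax t (pit t)) * C t / real t)"
    using abs_le_D2[OF cond1_ii[OF pistar_in pit_in[of t], of t]] pit_max[OF pistar_in, of t] assms(1,3)
    by linarith
  also have "\<dots> \<le> 2 * sqrt ((Vmax t pistar + Vmax t (pit t)) * C s / real s)"
  proof -
    have "0 \<le> Vmax t pistar + Vmax t (pit t)" using Vmax_nonneg assms(2,3) by (simp add: add_nonneg_nonneg)
    then have "(Vmax t pistar + Vmax t (pit t)) * (C t / real t)
        \<le> (Vmax t pistar + Vmax t (pit t)) * (C s / real s)"
      using Cc_div_antimono[OF N_ge_1 delta(1) assms(2,3,4)] by (intro mult_left_mono)
    then show ?thesis by simp
  qed
  finally show ?thesis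
    using abs_le_D1[OF cond1_ii[OF pit_in[of s] pit_in[of t] assms(1)]] pistar_max[OF pit_in[of s]]
    by linarith
qed

lemma Vmax_pistar_le_step:
  assumes "1 \<le> t"
    and IH: "\<And>s. 1 \<le> s \<Longrightarrow> s < t \<Longrightarrow>
      Vmax s pistar \<le> \<theta> * real K \<and> Vmax s (pit s) \<le> \<theta> * real K"
  shows "Vmax t pistar \<le> \<theta> * real K"
  unfolding Vbar_le_iff[OF assms(1)]
proof
  fix \<tau> assume \<tau>: "\<tau> \<in> {1..t}"
  show "Vround \<tau> pistar \<le> \<theta> * real K"
  proof (cases "\<tau> \<le> t0 K N \<delta> \<or> \<tau> < t1 K N \<delta>")
    case True
    then show ?thesis using Vround_le_theta_K_early \<tau> by auto
  next
    case False
    then have late: "t0 K N \<delta> < \<tau>" "t1 K N \<delta> \<le> \<tau>" by auto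
    define s where "s = \<tau> - 1"
    have s: "1 \<le> s" "t0 K N \<delta> \<le> s" "s < t"
      using late_round[OF late] \<tau> unfolding s_def by auto
    then have IH\<tau>: "Vmax s pistar \<le> \<theta> * real K" "Vmax s (pit s) \<le> \<theta> * real K"
      using IH by blast+
    have "Vround \<tau> pistar \<le> Vt_late_bound \<epsilon> \<rho> K (2 * ((Vmax s (pit s) + Vmax s pistar) + 0) / 45)"
      using Delta_pistar_le[OF s(2)] Vmax_nonneg[OF s(1)] unfolding s_def
      by (intro Vround_le_late_bound_of_Delta_le[OF pistar_in late]) (auto intro: add_nonneg_nonneg)
    also have "\<dots> \<le> \<theta> * real K"
      using IH\<tau> eps by (intro Vt_late_bound_le_theta_K[OF _ theta_ge_100 rho_eq]) simp_all
    finally show ?thesis .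
  qed
qed

lemma Vmax_pit_le_step:
  assumes "1 \<le> t"
    and IH: "\<And>s. 1 \<le> s \<Longrightarrow> s < t \<Longrightarrow>
      Vmax s pistar \<le> \<theta> * real K \<and> Vmax s (pit s) \<le> \<theta> * real K"
    and pistar: "Vmax t pistar \<le> \<theta> * real K"
  shows "Vmax t (pit t) \<le> \<theta> * real K"
proof -
  define M where "M = Vmax t (pit t)"
  have "Vmax t (pit t) \<le> max (\<theta> * real K) (Vt_late_bound \<epsilon> \<rho> K (4 * (\<theta> * real K + M) / 45))"
    unfolding Vbar_le_iff[OF assms(1)]
  proof
    fix \<tau> assume \<tau>: "\<tau> \<in> {1..t}"
    show "Vround \<tau> (pit t) \<le> max (\<theta> * real K) (Vt_late_bound \<epsilon> \<rho> K (4 * (\<theta> * real K + M) / 45))"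
    proof (cases "\<tau> \<le> t0 K N \<delta> \<or> \<tau> < t1 K N \<delta>")
      case True
      then have "Vround \<tau> (pit t) \<le> \<theta> * real K" using Vround_le_theta_K_early \<tau> by auto
      then show ?thesis by (rule order_trans[OF _ max.cobounded1])
    next
      case False
      then have late: "t0 K N \<delta> < \<tau>" "t1 K N \<delta> \<le> \<tau>" by auto
      define s where "s = \<tau> - 1"
      have s: "1 \<le> s" "t0 K N \<delta> \<le> s" "1 \<le> ln (real N * real s / \<delta>)" "s < t"
        using late_round[OF late] \<tau> unfolding s_def by auto
      have A: "Vmax t pistar + Vmax t (pit t) \<le> \<theta> * real K + M"
        using pistar unfolding M_def by simp
      have B: "Vmax s (pit s) + Vmax s (pit t) \<le> \<theta> * real K + M"
        using conjunct2[OF IH[OF s(1,4)]]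
          Vbar_mono[OF s(1) less_imp_le[OF s(4)], of K N \<delta> Pol P DX "pit t"]
        unfolding M_def by linarith
      have "Vround \<tau> (pit t) \<le> Vt_late_bound \<epsilon> \<rho> K
          (2 * ((Vmax t pistar + Vmax t (pit t)) + (Vmax s (pit s) + Vmax s (pit t))) / 45)"
        using Delta_pit_le[OF s(2,1) _ s(3), of t] s(4) Vmax_nonneg[OF s(1)] Vmax_nonneg[OF assms(1)]
        by (intro Vround_le_late_bound_of_Delta_le[OF pit_in late]) (auto simp: s_def intro: add_nonneg_nonneg)
      also have "\<dots> \<le> Vt_late_bound \<epsilon> \<rho> K (4 * (\<theta> * real K + M) / 45)"
        using A B eps by (intro Vt_late_bound_mono) auto
      finally show ?thesis by simp
    qed
  qed
  then show ?thesis
    using le_theta_K_of_le_Vt_late_bound[OF _ _ theta_ge_100 rho_eq] eps unfolding M_def by simp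
qed

lemma Vmax_le_theta_K:
  "1 \<le> t \<Longrightarrow> Vmax t pistar \<le> \<theta> * real K \<and> Vmax t (pit t) \<le> \<theta> * real K"
proof (induction t rule: less_induct)
  case (less t)
  have IH: "\<And>s. 1 \<le> s \<Longrightarrow> s < t \<Longrightarrow>
      Vmax s pistar \<le> \<theta> * real K \<and> Vmax s (pit s) \<le> \<theta> * real K"
    using less.IH by blast
  show ?case using Vmax_pistar_le_step[OF less.prems IH] Vmax_pit_le_step[OF less.prems IH] by blast
qed

end

theorem lemma13:
  fixes D :: "('x \<times> ('a::finite \<Rightarrow> real)) measure"
    and MX :: "'x measure"
    and Pol :: "('x \<Rightarrow> 'a) set"
    and \<delta> \<epsilon> c :: real
    and x :: "nat \<Rightarrow> 'x" and a :: "nat \<Rightarrow> 'a"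
    and rv :: "nat \<Rightarrow> 'a \<Rightarrow> real" and r p :: "nat \<Rightarrow> real"
    and P :: "nat \<Rightarrow> ('x \<Rightarrow> 'a) \<Rightarrow> real"
    and pit :: "nat \<Rightarrow> ('x \<Rightarrow> 'a)"
    and pistar :: "'x \<Rightarrow> 'a"
  defines "K \<equiv> CARD('a)"
    and "N \<equiv> card Pol"
    and "DX \<equiv> distr D MX fst"
    and "\<rho> \<equiv> 7500 / \<epsilon> ^ 3"
    and "\<theta> \<equiv> (7500 / \<epsilon> ^ 3 + 1) / (1 - (1 + \<epsilon>) / 2)"
    and "etaD \<equiv> (\<lambda>\<pi>. \<integral>z. snd z (\<pi> (fst z)) \<partial>D)"
    and "\<eta> \<equiv> eta_emp x a r p"
    and "\<Delta> \<equiv> (\<lambda>t W. eta_emp x a r p t (detW (pit t)) - eta_emp x a r p t W)"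
    and "C \<equiv> Cc (card Pol) \<delta>"
    and "\<mu> \<equiv> mu CARD('a) (card Pol) \<delta>"
    and "V \<equiv> Vbar CARD('a) (card Pol) \<delta> Pol P (distr D MX fst)"
  assumes D_prob: "prob_space D"
    and fst_meas: "fst \<in> D \<rightarrow>\<^sub>M MX"
    and pol_meas: "\<forall>\<pi>\<in>Pol. \<pi> \<in> MX \<rightarrow>\<^sub>M count_space UNIV"
    and rew_meas: "\<forall>\<pi>\<in>Pol. (\<lambda>z. snd z (\<pi> (fst z))) \<in> borel_measurable D"
    and rew_range: "AE z in D. \<forall>b. 0 \<le> snd z b \<and> snd z b \<le> 1"
    and Pi_fin: "finite Pol" and Pi_ne: "Pol \<noteq> {}"
    and delta: "0 < \<delta>" "\<delta> < 1"
    and eps: "0 < \<epsilon>" "\<epsilon> < 1"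
    and hist_x: "\<forall>t\<ge>1. x t \<in> space MX"
    and hist_rv: "\<forall>t\<ge>1. \<forall>b. 0 \<le> rv t b \<and> rv t b \<le> 1"
    and hist_r: "\<forall>t\<ge>1. r t = rv t (a t)"
    and pit_max: "\<forall>t. pit t \<in> Pol \<and> (\<forall>\<pi>\<in>Pol. \<eta> t (detW \<pi>) \<le> \<eta> t (detW (pit t)))"
    and pistar_max: "pistar \<in> Pol \<and> (\<forall>\<pi>\<in>Pol. etaD \<pi> \<le> etaD pistar)"
    and P_dist: "\<forall>t\<ge>1. is_dist Pol (P t)"
    and P_constr: "\<forall>t\<ge>1. \<forall>Q. is_dist Pol Q \<longrightarrow>
        (\<Sum>\<pi>\<in>Pol. Q \<pi> * emp_avg x (t - 1) (invW K (\<mu> t) Pol (P t) \<pi>))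
          \<le> max (4 * real K) (real (t - 1) * (\<Delta> (t - 1) (Wpol Pol Q))\<^sup>2 / (180 * C (t - 1)))
             + real K"
    and P_nearopt: "\<forall>t\<ge>1. \<forall>P'. is_dist Pol P' \<and>
        (\<forall>Q. is_dist Pol Q \<longrightarrow>
          (\<Sum>\<pi>\<in>Pol. Q \<pi> * emp_avg x (t - 1) (invW K (\<mu> t) Pol P' \<pi>))
            \<le> max (4 * real K) (real (t - 1) * (\<Delta> (t - 1) (Wpol Pol Q))\<^sup>2 / (180 * C (t - 1))))
        \<longrightarrow> (\<Sum>\<pi>\<in>Pol. P t \<pi> * \<Delta> (t - 1) (detW \<pi>))
              \<le> (\<Sum>\<pi>\<in>Pol. P' \<pi> * \<Delta> (t - 1) (detW \<pi>)) + c * sqrt (real K * C t / real t)"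
    and hist_p: "\<forall>t\<ge>1. p t = (1 - real K * \<mu> t) * Wpol Pol (P t) (x t) (a t) + \<mu> t"
    and cond1_i: "\<forall>\<pi>\<in>Pol. \<forall>t\<ge>t1 K N \<delta>.
        (\<integral>z. invW K (\<mu> t) Pol (P t) \<pi> z \<partial>DX)
          \<le> (1 + \<epsilon>) * emp_avg x (t - 1) (invW K (\<mu> t) Pol (P t) \<pi>) + \<rho> * real K"
    and cond1_ii: "\<forall>\<pi>\<in>Pol. \<forall>\<pi>'\<in>Pol. \<forall>t\<ge>t0 K N \<delta>.
        \<bar>(\<eta> t (detW \<pi>) - \<eta> t (detW \<pi>')) - (etaD \<pi> - etaD \<pi>')\<bar>
          \<le> 2 * sqrt ((V t \<pi> + V t \<pi>') * C t / real t)"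
  shows "\<forall>t\<ge>1. V t pistar \<le> \<theta> * real K \<and> V t (pit t) \<le> \<theta> * real K"
proof -
  have K_ge_1: "1 \<le> K" unfolding K_def using finite_UNIV_card_ge_0[where 'a='a] by simp
  have N_ge_1: "1 \<le> N" using Pi_fin Pi_ne by (simp add: N_def card_gt_0_iff Suc_le_eq)
  have rho_ge_99: "99 \<le> \<rho>"
  proof -
    have "0 < \<epsilon> ^ 3" "\<epsilon> ^ 3 \<le> 1" using eps by (auto simp: power_le_one)
    then show ?thesis unfolding \<rho>_def by (simp add: le_divide_eq)
  qed
  have prob_DX: "prob_space DX"
    unfolding DX_def by (rule prob_space.prob_space_distr[OF D_prob fst_meas])
  have params: "\<mu> = mu K N \<delta>" "C = Cc N \<delta>" "V = Vbar K N \<delta> Pol P DX"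
    by (simp_all add: \<mu>_def C_def V_def K_def N_def DX_def)
  interpret rucb: randomized_ucb_cond1 K N \<delta> \<epsilon> \<rho> Pol DX P x \<eta> etaD pit pistar
    using K_ge_1 N_ge_1 delta eps rho_ge_99 prob_DX Pi_fin pit_max pistar_max P_dist
      P_constr[unfolded params \<Delta>_def, folded \<eta>_def] cond1_i[unfolded params]
      cond1_ii[unfolded params]
    by (intro randomized_ucb_cond1.intro) simp_all
  have "rucb.\<theta> = \<theta>" unfolding rucb.\<theta>_def \<theta>_def by (simp add: \<rho>_def)
  then show ?thesis using rucb.Vmax_le_theta_K unfolding params by simp
qed

end
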